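(* Let $(g_t^* )_{t\in[0,1]}$ be a family of Lebesgue probability densities $g_t^*$ on $\mathbb{R}$ such that for every $s\in\mathbb{R}$ the function $t\mapsto g_t^*(s)$ is continuous on $[0,1]$ and $\int_{\mathbb{R}} \sup_{t\in[0,1]} g_t^*(s)\,ds<\infty$. Define \[ \|f\|_{g^*} := \int_{\mathbb{R}} \sup_{t\in[0,1]}\big(|f(t)|\,g_t^*(s)\big)\,ds, \qquad f\in E[0,1]. \] Then $\|\cdot\|_{g^*}$ is a $D$-norm; more precisely, for every real-valued random variable $X$ with Lebesgue density $h>0$, the process $\mathbf{Z}=(Z_t)_{t\in[0,1]}$ with $Z_t:=g_t^*(X)/h(X)$ is a generator and $\|f\|_{g^*}=E\big(\sup_{t\in[0,1]}|f(t)Z_t|\big)$ for all $f\in E[0,1]$.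
   Context: $E[0,1]$ denotes the set of all bounded real-valued functions on $[0,1]$ that have only finitely many discontinuities. $\bar C^+[0,1]$ denotes the set of non-negative continuous functions on $[0,1]$. A generator is a stochastic process $\mathbf{Z}=(Z_t)_{t\in[0,1]}$ with sample paths in $\bar C^+[0,1]$ such that $E(Z_t)=1$ for every $t\in[0,1]$ and $E(\sup_{t\in[0,1]}Z_t)<\infty$. A $D$-norm is a function on $E[0,1]$ of the form $\|f\|_D=E\big(\sup_{t\in[0,1]}|f(t)Z_t|\big)$, $f\in E[0,1]$, for some generator $\mathbf{Z}$; $\mathbf{Z}$ is then said to generate this $D$-norm. *)

theory Defs
  imports "HOL-Probability.Probability"
begin

text \<open>E[0,1]: bounded real functions on [0,1] with only finitely many discontinuities
  (continuity taken relative to [0,1]; values outside [0,1] are irrelevant).\<close>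
definition E01 :: "(real \<Rightarrow> real) set" where
  "E01 = {f. bounded (f ` {0..1}) \<and>
             finite {t \<in> {0..1}. \<not> continuous (at t within {0..1}) f}}"

definition generator :: "'a measure \<Rightarrow> (real \<Rightarrow> 'a \<Rightarrow> real) \<Rightarrow> bool" where
  "generator M Z \<longleftrightarrow>
     prob_space M \<and>
     (\<forall>t\<in>{0..1}. Z t \<in> borel_measurable M) \<and>
     (\<forall>\<omega>\<in>space M. continuous_on {0..1} (\<lambda>t. Z t \<omega>) \<and> (\<forall>t\<in>{0..1}. 0 \<le> Z t \<omega>)) \<and>
     (\<forall>t\<in>{0..1}. integrable M (Z t) \<and> integral\<^sup>L M (Z t) = 1) \<and>
     integrable M (\<lambda>\<omega>. SUP t\<in>{0..1}. Z t \<omega>)"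

definition Dnorm :: "'a measure \<Rightarrow> (real \<Rightarrow> 'a \<Rightarrow> real) \<Rightarrow> (real \<Rightarrow> real) \<Rightarrow> real" where
  "Dnorm M Z f = integral\<^sup>L M (\<lambda>\<omega>. SUP t\<in>{0..1}. \<bar>f t * Z t \<omega>\<bar>)"

definition gnorm :: "(real \<Rightarrow> real \<Rightarrow> real) \<Rightarrow> (real \<Rightarrow> real) \<Rightarrow> real" where
  "gnorm g f = integral\<^sup>L lborel (\<lambda>s. SUP t\<in>{0..1}. \<bar>f t\<bar> * g t s)"

end

theory Submission
  imports Defs
begin

text \<open>Since X has density h > 0, the change of variables gives
  E(\<phi>(X) / h(X)) = \<integral>\<phi> for every measurable \<phi>. With \<phi> = g t this yields E(Z t) = 1;
  with \<phi>(s) = sup_t \<bar>f t\<bar> g t s it yields the norm identity, because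
  sup_t \<bar>f t * Z t\<bar> = \<phi>(X) / h(X). The only delicate point is the measurability of \<phi>:
  away from the finitely many discontinuities of f the map t \<mapsto> \<bar>f t\<bar> g t s is continuous,
  so the supremum over [0,1] is already attained over the countable set consisting of the
  rationals in [0,1] and these discontinuities.\<close>

lemma cSUP_divide_const:
  fixes \<phi> :: "'i \<Rightarrow> real"
  assumes "S \<noteq> {}" "bdd_above (\<phi> ` S)" "0 < c"
  shows "(SUP t\<in>S. \<phi> t / c) = (SUP t\<in>S. \<phi> t) / c"
proof -
  have "mono (\<lambda>x::real. x / c)"
    using \<open>0 < c\<close> by (auto intro!: monoI divide_right_mono)
  moreover have "continuous (at_left (SUP t\<in>S. \<phi> t)) (\<lambda>x::real. x / c)"
    using \<open>0 < c\<close> by (intro continuous_intros) auto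
  ultimately show ?thesis
    using assms(1,2) continuous_at_Sup_mono[of "\<lambda>x. x / c" "\<phi> ` S"]
    by (simp add: image_image)
qed

lemma cSUP_eq_cSUP_dense_subset:
  fixes \<phi> :: "'a::t2_space \<Rightarrow> 'b::{conditionally_complete_linorder, linorder_topology}"
  assumes "T \<subseteq> S" "S \<subseteq> closure T" "bdd_above (\<phi> ` S)"
    and cont: "\<And>t. t \<in> S - T \<Longrightarrow> continuous (at t within S) \<phi>"
  shows "(SUP t\<in>S. \<phi> t) = (SUP t\<in>T. \<phi> t)"
proof (cases "S = {}")
  case False
  have bdd_T: "bdd_above (\<phi> ` T)"
    using assms(1,3) by (meson bdd_above_mono image_mono)
  have "\<phi> t \<le> (SUP t\<in>T. \<phi> t)" if "t \<in> S" for t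
  proof (cases "t \<in> T")
    case True
    then show ?thesis using bdd_T by (rule cSUP_upper)
  next
    case False
    with \<open>t \<in> S\<close> assms(2) have "t islimpt T"
      by (auto simp: closure_def)
    then have "at t within T \<noteq> bot"
      by (simp add: trivial_limit_within)
    moreover have "(\<phi> \<longlongrightarrow> \<phi> t) (at t within T)"
      using cont[of t] \<open>t \<in> S\<close> False assms(1)
      by (auto simp: continuous_within intro: tendsto_within_subset)
    moreover have "\<forall>\<^sub>F x in at t within T. \<phi> x \<le> (SUP t\<in>T. \<phi> t)"
      unfolding eventually_at_filter using bdd_T
      by (intro always_eventually) (auto intro: cSUP_upper)
    ultimately show ?thesis
      by (intro tendsto_upperbound)
  qed
  moreover have "T \<noteq> {}"
    using False assms(2) by auto
  ultimately show ?thesis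
    using False assms(1,3) by (intro antisym cSUP_least cSUP_subset_mono) auto
qed (use assms(1) in auto)

lemma borel_measurable_cSUP_dense_subset:
  fixes F :: "'i::t2_space \<Rightarrow> 'a \<Rightarrow> 'b::{conditionally_complete_linorder, linorder_topology, second_countable_topology}"
  assumes "countable T" "T \<subseteq> S" "S \<subseteq> closure T"
    and meas: "\<And>i. i \<in> T \<Longrightarrow> F i \<in> borel_measurable M"
    and bdd: "\<And>x. x \<in> space M \<Longrightarrow> bdd_above ((\<lambda>i. F i x) ` S)"
    and cont: "\<And>x t. x \<in> space M \<Longrightarrow> t \<in> S - T \<Longrightarrow> continuous (at t within S) (\<lambda>i. F i x)"
  shows "(\<lambda>x. SUP i\<in>S. F i x) \<in> borel_measurable M"
proof -
  have "bdd_above ((\<lambda>i. F i x) ` T)" if "x \<in> space M" for x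
    using bdd[OF that] assms(2) by (meson bdd_above_mono image_mono)
  then have "(\<lambda>x. SUP i\<in>T. F i x) \<in> borel_measurable M"
    using assms(1) meas by (intro borel_measurable_cSUP)
  then show ?thesis
    using assms(2,3) bdd cont by (subst measurable_cong[OF cSUP_eq_cSUP_dense_subset]) auto
qed

lemma closure_Icc01_Rats: "{0..1::real} \<subseteq> closure ({0..1} \<inter> \<rat>)"
  using closure_convex_Int_superset[of "{0..1::real}" \<rat>] by (simp add: Rats_closure_real)

lemma bdd_above_abs_mult_continuous:
  fixes f g :: "'a::topological_space \<Rightarrow> real"
  assumes "compact S" "bounded (f ` S)" "continuous_on S g"
  shows "bdd_above ((\<lambda>t. \<bar>f t\<bar> * g t) ` S)"
proof -
  obtain B where B: "\<And>t. t \<in> S \<Longrightarrow> \<bar>f t\<bar> \<le> B"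
    using assms(2) by (auto simp: bounded_real)
  obtain K where K: "\<And>t. t \<in> S \<Longrightarrow> \<bar>g t\<bar> \<le> K"
    using compact_imp_bounded[OF compact_continuous_image[OF assms(3,1)]] by (auto simp: bounded_real)
  have "\<bar>f t\<bar> * g t \<le> B * K" if "t \<in> S" for t
    using B[OF that] K[OF that] by (metis abs_ge_self abs_ge_zero mult_mono order.trans abs_mult abs_abs)
  then show ?thesis
    by (rule bdd_aboveI2)
qed

lemma borel_measurable_SUP_E01:
  fixes g :: "real \<Rightarrow> 'a \<Rightarrow> real"
  assumes "f \<in> E01"
    and "\<And>t. t \<in> {0..1} \<Longrightarrow> g t \<in> borel_measurable M"
    and "\<And>x. x \<in> space M \<Longrightarrow> continuous_on {0..1} (\<lambda>t. g t x)"
  shows "(\<lambda>x. SUP t\<in>{0..1}. \<bar>f t\<bar> * g t x) \<in> borel_measurable M"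
proof -
  define D where "D = {t \<in> {0..1}. \<not> continuous (at t within {0..1}) f}"
  have "finite D" "bounded (f ` {0..1})"
    using \<open>f \<in> E01\<close> by (auto simp: E01_def D_def)
  show ?thesis
  proof (rule borel_measurable_cSUP_dense_subset[where T = "({0..1} \<inter> \<rat>) \<union> D"])
    show "countable (({0..1} \<inter> \<rat>) \<union> D)"
      using \<open>finite D\<close> countable_rat by (auto intro: countable_finite)
    show "{0..1} \<subseteq> closure ({0..1} \<inter> \<rat> \<union> D)"
      using closure_Icc01_Rats closure_mono[of "{0..1} \<inter> \<rat>"] by blast
  next
    fix x t assume "x \<in> space M" "t \<in> {0..1} - ({0..1} \<inter> \<rat> \<union> D)"
    then show "continuous (at t within {0..1}) (\<lambda>t. \<bar>f t\<bar> * g t x)"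
      using assms(3)[of x] by (intro continuous_intros) (auto simp: D_def continuous_on_eq_continuous_within)
  qed (use assms \<open>bounded (f ` {0..1})\<close> in \<open>auto simp: D_def intro: bdd_above_abs_mult_continuous\<close>)
qed

lemma distributed_divide_density:
  assumes X: "distributed M N X (\<lambda>x. ennreal (h x))"
    and h_pos: "\<And>x. x \<in> space N \<Longrightarrow> 0 < h x"
    and \<phi>: "\<phi> \<in> borel_measurable N"
  shows "integrable M (\<lambda>\<omega>. \<phi> (X \<omega>) / h (X \<omega>)) \<longleftrightarrow> integrable N \<phi>"
    and "(\<integral>\<omega>. \<phi> (X \<omega>) / h (X \<omega>) \<partial>M) = (\<integral>x. \<phi> x \<partial>N)"
proof -
  have h_nonneg: "\<And>x. x \<in> space N \<Longrightarrow> 0 \<le> h x"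
    using h_pos by (simp add: less_imp_le)
  note [measurable] = distributed_real_measurable[OF h_nonneg X]
  have cancel: "\<And>x. x \<in> space N \<Longrightarrow> h x * (\<phi> x / h x) = \<phi> x"
    using h_pos by (simp add: less_imp_neq[symmetric])
  have ratio: "(\<lambda>x. \<phi> x / h x) \<in> borel_measurable N"
    using \<phi> by measurable
  have "integrable M (\<lambda>\<omega>. \<phi> (X \<omega>) / h (X \<omega>)) \<longleftrightarrow> integrable N (\<lambda>x. h x * (\<phi> x / h x))"
    using distributed_integrable[OF X ratio h_nonneg] by simp
  also have "\<dots> \<longleftrightarrow> integrable N \<phi>"
    using cancel by (rule Bochner_Integration.integrable_cong[OF refl])
  finally show "integrable M (\<lambda>\<omega>. \<phi> (X \<omega>) / h (X \<omega>)) \<longleftrightarrow> integrable N \<phi>" .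
  have "(\<integral>\<omega>. \<phi> (X \<omega>) / h (X \<omega>) \<partial>M) = (\<integral>x. h x * (\<phi> x / h x) \<partial>N)"
    using distributed_integral[OF X ratio h_nonneg] by simp
  also have "\<dots> = (\<integral>x. \<phi> x \<partial>N)"
    using cancel by (rule Bochner_Integration.integral_cong[OF refl])
  finally show "(\<integral>\<omega>. \<phi> (X \<omega>) / h (X \<omega>) \<partial>M) = (\<integral>x. \<phi> x \<partial>N)" .
qed

lemma one_in_E01: "(\<lambda>_. 1) \<in> E01"
  by (simp add: E01_def image_constant_conv)

context
  fixes g :: "real \<Rightarrow> real \<Rightarrow> real" and M :: "'a measure" and X :: "'a \<Rightarrow> real"
    and h :: "real \<Rightarrow> real"
  assumes g_meas: "\<And>t. t \<in> {0..1} \<Longrightarrow> g t \<in> borel_measurable lborel"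
    and g_nonneg: "\<And>t s. t \<in> {0..1} \<Longrightarrow> 0 \<le> g t s"
    and g_cont: "\<And>s. continuous_on {0..1} (\<lambda>t. g t s)"
    and X: "distributed M lborel X (\<lambda>x. ennreal (h x))"
    and h_pos: "\<And>x. 0 < h x"
begin

lemma SUP_abs_mult_density_ratio:
  assumes "bounded (f ` {0..1})"
  shows "(SUP t\<in>{0..1}. \<bar>f t * (g t s / h s)\<bar>) = (SUP t\<in>{0..1}. \<bar>f t\<bar> * g t s) / h s"
proof -
  have "(SUP t\<in>{0..1}. \<bar>f t * (g t s / h s)\<bar>) = (SUP t\<in>{0..1}. \<bar>f t\<bar> * g t s / h s)"
    using g_nonneg h_pos by (intro SUP_cong) (auto simp: abs_mult less_imp_le)
  also have "\<dots> = (SUP t\<in>{0..1}. \<bar>f t\<bar> * g t s) / h s"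
    using assms g_cont h_pos
    by (intro cSUP_divide_const bdd_above_abs_mult_continuous) auto
  finally show ?thesis .
qed

lemma Dnorm_density_ratio:
  assumes "f \<in> E01"
  shows "integrable M (\<lambda>\<omega>. SUP t\<in>{0..1}. \<bar>f t * (g t (X \<omega>) / h (X \<omega>))\<bar>)
           \<longleftrightarrow> integrable lborel (\<lambda>s. SUP t\<in>{0..1}. \<bar>f t\<bar> * g t s)"
    and "Dnorm M (\<lambda>t \<omega>. g t (X \<omega>) / h (X \<omega>)) f = gnorm g f"
proof -
  have "bounded (f ` {0..1})"
    using assms by (simp add: E01_def)
  then have sup_eq: "(\<lambda>\<omega>. SUP t\<in>{0..1}. \<bar>f t * (g t (X \<omega>) / h (X \<omega>))\<bar>)
      = (\<lambda>\<omega>. (SUP t\<in>{0..1}. \<bar>f t\<bar> * g t (X \<omega>)) / h (X \<omega>))"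
    by (intro ext SUP_abs_mult_density_ratio)
  have meas: "(\<lambda>s. SUP t\<in>{0..1}. \<bar>f t\<bar> * g t s) \<in> borel_measurable lborel"
    using assms g_meas g_cont by (rule borel_measurable_SUP_E01)
  show "integrable M (\<lambda>\<omega>. SUP t\<in>{0..1}. \<bar>f t * (g t (X \<omega>) / h (X \<omega>))\<bar>)
      \<longleftrightarrow> integrable lborel (\<lambda>s. SUP t\<in>{0..1}. \<bar>f t\<bar> * g t s)"
    unfolding sup_eq using X h_pos meas by (rule distributed_divide_density)
  show "Dnorm M (\<lambda>t \<omega>. g t (X \<omega>) / h (X \<omega>)) f = gnorm g f"
    unfolding Dnorm_def gnorm_def sup_eq using X h_pos meas by (rule distributed_divide_density)
qed

lemma generator_density_ratio:
  assumes "prob_space M"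
    and g_prob: "\<And>t. t \<in> {0..1} \<Longrightarrow> (\<integral>\<^sup>+ s. ennreal (g t s) \<partial>lborel) = 1"
    and g_sup: "(\<integral>\<^sup>+ s. ennreal (SUP t\<in>{0..1}. g t s) \<partial>lborel) < \<infinity>"
  shows "generator M (\<lambda>t \<omega>. g t (X \<omega>) / h (X \<omega>))"
  unfolding generator_def
proof (intro conjI ballI)
  fix t :: real assume t: "t \<in> {0..1}"
  have [measurable]: "X \<in> measurable M lborel" "h \<in> borel_measurable lborel"
    "g t \<in> borel_measurable lborel"
    using distributed_measurable[OF X] distributed_real_measurable[OF _ X] h_pos g_meas[OF t]
    by (auto simp: less_imp_le)
  show "(\<lambda>\<omega>. g t (X \<omega>) / h (X \<omega>)) \<in> borel_measurable M"
    by measurable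
  have "integrable lborel (g t)"
    using g_prob[OF t] g_nonneg[OF t] by (intro integrableI_nonneg) auto
  then show "integrable M (\<lambda>\<omega>. g t (X \<omega>) / h (X \<omega>))"
    using distributed_divide_density(1)[OF X] h_pos by simp
  have "integral\<^sup>L lborel (g t) = 1"
    using g_prob[OF t] g_nonneg[OF t] by (simp add: integral_eq_nn_integral)
  then show "integral\<^sup>L M (\<lambda>\<omega>. g t (X \<omega>) / h (X \<omega>)) = 1"
    using distributed_divide_density(2)[OF X] h_pos by simp
next
  show "integrable M (\<lambda>\<omega>. SUP t\<in>{0..1}. g t (X \<omega>) / h (X \<omega>))"
  proof -
    have sup_nonneg: "0 \<le> (SUP t\<in>{0..1}. g t s)" for s
    proof -
      have "g 0 s \<le> (SUP t\<in>{0..1}. g t s)"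
        using compact_continuous_image[OF g_cont, of s]
        by (intro cSUP_upper bounded_imp_bdd_above compact_imp_bounded) auto
      then show ?thesis
        using g_nonneg[of 0 s] by simp
    qed
    have "integrable lborel (\<lambda>s. SUP t\<in>{0..1}. \<bar>1\<bar> * g t s)"
      using g_sup sup_nonneg borel_measurable_SUP_E01[OF one_in_E01 g_meas g_cont]
      by (intro integrableI_nonneg) auto
    moreover have "(SUP t\<in>{0..1}. g t (X \<omega>) / h (X \<omega>))
        = (SUP t\<in>{0..1}. \<bar>1 * (g t (X \<omega>) / h (X \<omega>))\<bar>)" for \<omega>
      using g_nonneg h_pos by (intro SUP_cong) (auto simp: less_imp_le)
    ultimately show ?thesis
      using Dnorm_density_ratio(1)[OF one_in_E01] by simp
  qed
qed (use assms g_cont g_nonneg h_pos in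
      \<open>auto intro!: continuous_intros simp: less_imp_le less_imp_neq[symmetric]\<close>)

end

theorem proposition2p2:
  fixes g :: "real \<Rightarrow> real \<Rightarrow> real"
    and M :: "'a measure" and X :: "'a \<Rightarrow> real" and h :: "real \<Rightarrow> real"
  assumes g_meas: "\<And>t. t \<in> {0..1} \<Longrightarrow> g t \<in> borel_measurable lborel"
    and g_nonneg: "\<And>t s. t \<in> {0..1} \<Longrightarrow> 0 \<le> g t s"
    and g_prob: "\<And>t. t \<in> {0..1} \<Longrightarrow> (\<integral>\<^sup>+ s. ennreal (g t s) \<partial>lborel) = 1"
    and g_cont: "\<And>s. continuous_on {0..1} (\<lambda>t. g t s)"
    and g_sup: "(\<integral>\<^sup>+ s. ennreal (SUP t\<in>{0..1}. g t s) \<partial>lborel) < \<infinity>"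
    and M: "prob_space M"
    and X: "distributed M lborel X (\<lambda>x. ennreal (h x))"
    and h_pos: "\<And>x. 0 < h x"
  shows "generator M (\<lambda>t \<omega>. g t (X \<omega>) / h (X \<omega>)) \<and>
         (\<forall>f\<in>E01. gnorm g f = Dnorm M (\<lambda>t \<omega>. g t (X \<omega>) / h (X \<omega>)) f)"
  using generator_density_ratio[OF g_meas g_nonneg g_cont X h_pos M g_prob g_sup]
    Dnorm_density_ratio(2)[OF g_meas g_nonneg g_cont X h_pos]
  by simp

end
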